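(* Let $t,k,q,r\in\mathbb{N}$. Let $\mathbf{I}_1$ be a $t$-boundaried CSP instance with $t$-boundaried incidence graph $(G,Z)$ such that $G$ admits no $(8^q,k+1)$-separation, and let $(H,J)$ be the $t$-boundaried incidence graph of a $t$-boundaried CSP instance $\mathbf{I}_2$ with $|V(H)|\le r$. Then the incidence graph $G\oplus H$ of $\mathbf{I}_1\oplus\mathbf{I}_2$ has no $(8^q+r,k+1)$-separation.
   Context: The incidence graph of a CSP instance is the bipartite graph on variables and constraints with $x\sim C$ iff $x$ in the scope of $C$. A $t$-boundaried incidence graph $(G,Z)$ is an incidence graph $G$ with a set $Z$ of at most $t$ variable vertices carrying distinct labels in $\{1,\dots,t\}$; a $t$-boundaried CSP instance is the corresponding instance. Gluing $(G,Z)\oplus(H,J)$ takes the disjoint union and identifies boundary vertices with equal labels. A $(q,k)$-separation of an incidence graph $G$ is a partition $(A,S,B)$ of $V(G)$ with $S$ consisting of variable vertices, $N(A),N(B)\subseteq S$, $|S|\le k$, $|A|,|B|\ge q$. *)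

theory Defs
  imports Main
begin

text \<open>Incidence graph of a CSP instance: a bipartite graph with a set of variable vertices,
 a set of constraint vertices, and incidences (x, C) meaning variable x is in the scope of C.\<close>

record 'v igraph =
  vars :: "'v set"
  cons :: "'v set"
  inc  :: "('v \<times> 'v) set"

definition igraph :: "'v igraph \<Rightarrow> bool" where
  "igraph G \<longleftrightarrow> finite (vars G) \<and> finite (cons G) \<and> vars G \<inter> cons G = {}
      \<and> inc G \<subseteq> vars G \<times> cons G"

definition verts :: "'v igraph \<Rightarrow> 'v set" where
  "verts G = vars G \<union> cons G"

definition adj :: "'v igraph \<Rightarrow> 'v \<Rightarrow> 'v \<Rightarrow> bool" where
  "adj G u v \<longleftrightarrow> (u, v) \<in> inc G \<or> (v, u) \<in> inc G"

definition nbhd :: "'v igraph \<Rightarrow> 'v set \<Rightarrow> 'v set" where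
  "nbhd G A = {v \<in> verts G - A. \<exists>u\<in>A. adj G u v}"

text \<open>A t-boundaried incidence graph (G, Z): the boundary Z is given by a partial labelling
 map from labels in {1..t} to distinct variable vertices.\<close>
definition bdd_igraph :: "nat \<Rightarrow> 'v igraph \<Rightarrow> (nat \<Rightarrow> 'v option) \<Rightarrow> bool" where
  "bdd_igraph t G Z \<longleftrightarrow> igraph G \<and> dom Z \<subseteq> {1..t} \<and> inj_on Z (dom Z) \<and> ran Z \<subseteq> vars G"

text \<open>Gluing: disjoint union (vertex type 'v + 'w) in which every boundary vertex of H whose
 label is also used in G is identified with the boundary vertex of G carrying that label.\<close>
definition glue_vtx :: "(nat \<Rightarrow> 'v option) \<Rightarrow> (nat \<Rightarrow> 'w option) \<Rightarrow> 'w \<Rightarrow> 'v + 'w" where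
  "glue_vtx Z J w =
     (if \<exists>i. J i = Some w \<and> i \<in> dom Z
      then Inl (the (Z (SOME i. J i = Some w \<and> i \<in> dom Z)))
      else Inr w)"

definition glue :: "'v igraph \<Rightarrow> (nat \<Rightarrow> 'v option) \<Rightarrow> 'w igraph \<Rightarrow> (nat \<Rightarrow> 'w option)
                     \<Rightarrow> ('v + 'w) igraph" where
  "glue G Z H J =
     \<lparr> vars = Inl ` vars G \<union> glue_vtx Z J ` vars H,
       cons = Inl ` cons G \<union> Inr ` cons H,
       inc  = map_prod Inl Inl ` inc G \<union> (\<lambda>(x, c). (glue_vtx Z J x, Inr c)) ` inc H \<rparr>"

definition is_separation :: "'v igraph \<Rightarrow> nat \<Rightarrow> nat \<Rightarrow> 'v set \<Rightarrow> 'v set \<Rightarrow> 'v set \<Rightarrow> bool" where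
  "is_separation G q k A S B \<longleftrightarrow>
     A \<inter> S = {} \<and> A \<inter> B = {} \<and> S \<inter> B = {} \<and> A \<union> S \<union> B = verts G \<and>
     S \<subseteq> vars G \<and> nbhd G A \<subseteq> S \<and> nbhd G B \<subseteq> S \<and>
     card S \<le> k \<and> card A \<ge> q \<and> card B \<ge> q"

definition has_separation :: "'v igraph \<Rightarrow> nat \<Rightarrow> nat \<Rightarrow> bool" where
  "has_separation G q k \<longleftrightarrow> (\<exists>A S B. is_separation G q k A S B)"

end

theory Submission
  imports Defs
begin

text \<open>The glued graph contains a copy of \<open>G\<close> via \<open>Inl\<close>, and everything outside that copy comes from
  \<open>H\<close>. Pulling a separation \<open>(A, S, B)\<close> of the glued graph back along \<open>Inl\<close> gives a partition of
  \<open>G\<close> with the same separator property and a smaller separator, while each side loses at most the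
  \<open>|V(H)| \<le> r\<close> vertices that do not lie in the copy of \<open>G\<close>.\<close>

lemma has_separation_embedding:
  fixes f :: "'a \<Rightarrow> 'b"
  assumes sep: "has_separation G' (q + r) k"
    and fin: "finite (verts G')"
    and inj: "inj_on f (verts G)"
    and verts_into: "f ` verts G \<subseteq> verts G'"
    and vars_reflect: "\<And>x. x \<in> verts G \<Longrightarrow> f x \<in> vars G' \<Longrightarrow> x \<in> vars G"
    and adj_pres: "\<And>u v. adj G u v \<Longrightarrow> adj G' (f u) (f v)"
    and outside: "card (verts G' - f ` verts G) \<le> r"
  shows "has_separation G q k"
proof -
  obtain A S B where AS_B: "is_separation G' (q + r) k A S B"
    using sep by (auto simp: has_separation_def)
  define pull where "pull X = f -` X \<inter> verts G" for X
  have cover: "A \<union> S \<union> B = verts G'"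
    using AS_B by (simp add: is_separation_def)
  have finG: "finite (verts G)"
    using fin verts_into inj by (meson finite_imageD finite_subset)
  have nbhd_pull: "nbhd G (pull X) \<subseteq> pull S" if "nbhd G' X \<subseteq> S" for X
  proof
    fix v assume "v \<in> nbhd G (pull X)"
    then obtain u where "v \<in> verts G" "v \<notin> pull X" "u \<in> pull X" "adj G u v"
      by (auto simp: nbhd_def)
    then have "f v \<in> nbhd G' X"
      using verts_into adj_pres by (auto simp: nbhd_def pull_def)
    with that \<open>v \<in> verts G\<close> show "v \<in> pull S" by (auto simp: pull_def)
  qed
  have card_pull: "q \<le> card (pull X)" if "X \<subseteq> verts G'" "q + r \<le> card X" for X
  proof -
    have "X \<subseteq> f ` pull X \<union> (verts G' - f ` verts G)"
      using that(1) by (auto simp: pull_def)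
    moreover have "finite (f ` pull X \<union> (verts G' - f ` verts G))"
      using fin finG by (auto simp: pull_def)
    ultimately have "card X \<le> card (f ` pull X \<union> (verts G' - f ` verts G))"
      by (rule card_mono[rotated])
    also have "\<dots> \<le> card (f ` pull X) + card (verts G' - f ` verts G)"
      by (rule card_Un_le)
    also have "\<dots> \<le> card (pull X) + r"
      using outside by (intro add_mono card_image_le) (auto simp: pull_def intro: finite_subset[OF _ finG])
    finally show ?thesis using that(2) by linarith
  qed
  have card_S: "card (pull S) \<le> card S"
  proof -
    have "card (pull S) = card (f ` pull S)"
      using inj by (intro card_image[symmetric]) (auto simp: pull_def intro: inj_on_subset)
    also have "\<dots> \<le> card S"
      using cover fin by (intro card_mono) (auto simp: pull_def intro: finite_subset)
    finally show ?thesis .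
  qed
  have "pull A \<union> pull S \<union> pull B = verts G"
    unfolding pull_def using cover verts_into by blast
  moreover have "pull S \<subseteq> vars G"
    using AS_B vars_reflect by (auto simp: is_separation_def pull_def)
  moreover have "q \<le> card (pull A)" "q \<le> card (pull B)"
    using AS_B cover by (auto simp: is_separation_def intro!: card_pull)
  ultimately have "is_separation G q k (pull A) (pull S) (pull B)"
    using AS_B nbhd_pull card_S unfolding is_separation_def by (auto simp: pull_def)
  then show ?thesis by (auto simp: has_separation_def)
qed

lemma glue_vtx_mem:
  assumes "ran Z \<subseteq> vars G"
  shows "glue_vtx Z J w \<in> Inl ` vars G \<union> {Inr w}"
proof (cases "\<exists>i. J i = Some w \<and> i \<in> dom Z")
  case True
  define i where "i = (SOME i. J i = Some w \<and> i \<in> dom Z)"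
  have "J i = Some w \<and> i \<in> dom Z" unfolding i_def using True by (rule someI_ex)
  then obtain v where v: "Z i = Some v" by auto
  then have "v \<in> vars G" using assms by (auto simp: ran_def)
  moreover have "glue_vtx Z J w = Inl v"
    using True v by (simp add: glue_vtx_def i_def[symmetric])
  ultimately show ?thesis by simp
qed (auto simp: glue_vtx_def)

lemma vars_glue_subset:
  assumes "ran Z \<subseteq> vars G"
  shows "vars (glue G Z H J) \<subseteq> Inl ` vars G \<union> Inr ` vars H"
  using glue_vtx_mem[OF assms, of J] by (auto simp: glue_def)

lemma verts_glue_subset:
  assumes "ran Z \<subseteq> vars G"
  shows "verts (glue G Z H J) \<subseteq> Inl ` verts G \<union> Inr ` verts H"
proof -
  have "cons (glue G Z H J) = Inl ` cons G \<union> Inr ` cons H"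
    by (simp add: glue_def)
  with vars_glue_subset[OF assms, of H J] show ?thesis
    unfolding verts_def by blast
qed

lemma Inl_verts_subset_glue: "Inl ` verts G \<subseteq> verts (glue G Z H J)"
  by (auto simp: verts_def glue_def)

lemma adj_glue_Inl: "adj G u v \<Longrightarrow> adj (glue G Z H J) (Inl u) (Inl v)"
  by (auto simp: adj_def glue_def)

theorem lemma12:
  fixes t k q r :: nat
    and G :: "'v igraph" and Z :: "nat \<Rightarrow> 'v option"
    and H :: "'w igraph" and J :: "nat \<Rightarrow> 'w option"
  assumes "bdd_igraph t G Z"
    and "bdd_igraph t H J"
    and "\<not> has_separation G (8 ^ q) (k + 1)"
    and "card (verts H) \<le> r"
  shows "\<not> has_separation (glue G Z H J) (8 ^ q + r) (k + 1)"
proof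
  let ?GH = "glue G Z H J"
  assume sep: "has_separation ?GH (8 ^ q + r) (k + 1)"
  have ran: "ran Z \<subseteq> vars G" and finH: "finite (verts H)"
    using assms(1,2) by (auto simp: bdd_igraph_def igraph_def verts_def)
  have "finite (verts G)"
    using assms(1) by (auto simp: bdd_igraph_def igraph_def verts_def)
  with finH have fin: "finite (verts ?GH)"
    using verts_glue_subset[OF ran] by (meson finite_Un finite_imageI finite_subset)
  have "card (verts ?GH - Inl ` verts G) \<le> card (Inr ` verts H :: ('v + 'w) set)"
    using verts_glue_subset[OF ran] finH by (intro card_mono) auto
  then have outside: "card (verts ?GH - Inl ` verts G) \<le> r"
    using assms(4) by (simp add: card_image)
  have "has_separation G (8 ^ q) (k + 1)"
    using sep fin _ Inl_verts_subset_glue _ adj_glue_Inl outside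
  proof (rule has_separation_embedding)
    show "inj_on Inl (verts G)" by simp
    show "x \<in> vars G" if "Inl x \<in> vars ?GH" for x
      using that vars_glue_subset[OF ran] by auto
  qed
  with assms(3) show False ..
qed

end
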